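(* Let $n \in \mathbb{N}$ and let $(F, M, \mathcal{R}, c)$ be an instance of the feasibility problem such that either (i) $c_r \in \{1, 2, \dots, n\}$ for all $r \in \mathcal{R}$ and $R_i > 0$ for every $i = 1, \dots, n$; or (ii) $c_r \in \{2^0, 2^1, \dots, 2^n\}$ for all $r \in \mathcal{R}$ and $R_{2^i} > 0$ for every $i = 0, \dots, n$. Then the instance is feasible if and only if $$F + M \le \sum_{r \in \mathcal{R}} c_r.$$
   Context: An instance $(F, M, \mathcal{R}, c)$ of the feasibility problem (of patient-to-room assignment with gender separation, for a single time period) consists of nonnegative integers $F$ (number of female patients) and $M$ (number of male patients), a finite set $\mathcal{R}$ of rooms, and a capacity $c_r \in \mathbb{N}$ (positive integer) for each room $r \in \mathcal{R}$. The instance is called feasible if there exists a subset $S \subseteq \mathcal{R}$ with $\sum_{r \in S} c_r \ge F$ and $\sum_{r \in \mathcal{R} \setminus S} c_r \ge M$. For $k \in \mathbb{N}$, $R_k := |\{ r \in \mathcal{R} : c_r = k\}|$ denotes the number of rooms of capacity $k$. *)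

theory Defs
  imports Main
begin

text \<open>An instance (F, M, Rs, c): F female and M male patients, a finite set Rs of rooms,
  and positive integer capacities c r for r in Rs.\<close>

definition is_instance :: "nat \<Rightarrow> nat \<Rightarrow> 'r set \<Rightarrow> ('r \<Rightarrow> nat) \<Rightarrow> bool" where
  "is_instance F M Rs c \<longleftrightarrow> finite Rs \<and> (\<forall>r\<in>Rs. c r > 0)"

definition feasible :: "nat \<Rightarrow> nat \<Rightarrow> 'r set \<Rightarrow> ('r \<Rightarrow> nat) \<Rightarrow> bool" where
  "feasible F M Rs c \<longleftrightarrow>
     (\<exists>S. S \<subseteq> Rs \<and> (\<Sum>r\<in>S. c r) \<ge> F \<and> (\<Sum>r\<in>Rs - S. c r) \<ge> M)"

definition num_rooms :: "'r set \<Rightarrow> ('r \<Rightarrow> nat) \<Rightarrow> nat \<Rightarrow> nat" where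
  "num_rooms Rs c k = card {r \<in> Rs. c r = k}"

end

theory Submission
  imports Defs
begin

text \<open>If every capacity exceeds the total capacity of the strictly smaller rooms by at most one
  (a form of Brown's completeness criterion), then every integer between 0 and the total capacity is the
  capacity of some set of rooms: split off a room of maximal capacity and use it exactly when the
  target is too large for the remaining rooms. Taking a set of total capacity exactly F for the
  female patients then leaves enough room for M male patients whenever F + M fits overall. Under
  either hypothesis of the theorem the criterion holds, because all values 1, ..., k - 1
  (respectively 1, 2, ..., 2^(k-1)) occur below a capacity k (respectively 2^k), and they sum to
  at least k - 1 (respectively to 2^k - 1).\<close>

definition brown_condition :: "'r set \<Rightarrow> ('r \<Rightarrow> nat) \<Rightarrow> bool" where
  "brown_condition Rs c \<longleftrightarrow> (\<forall>r\<in>Rs. c r \<le> 1 + (\<Sum>s\<in>{s\<in>Rs. c s < c r}. c s))"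

lemma brown_condition_insert_max:
  assumes "brown_condition (insert x Rs) c" and "\<forall>y\<in>Rs. c y \<le> c x"
  shows "brown_condition Rs c"
proof -
  have "{s\<in>insert x Rs. c s < c y} = {s\<in>Rs. c s < c y}" if "y \<in> Rs" for y
    using assms(2) that by fastforce
  then show ?thesis
    using assms(1) by (simp add: brown_condition_def)
qed

lemma brown_condition_subset_sum:
  fixes c :: "'r \<Rightarrow> nat"
  assumes "finite Rs" and "brown_condition Rs c" and "t \<le> (\<Sum>r\<in>Rs. c r)"
  shows "\<exists>S\<subseteq>Rs. (\<Sum>r\<in>S. c r) = t"
  using assms
proof (induction Rs arbitrary: t rule: finite_ranking_induct[where f = c])
  case empty
  then show ?case by simp
next
  case (insert x Rs)
  show ?case
  proof (cases "x \<in> Rs")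
    case True
    then have "insert x Rs = Rs" by blast
    then show ?thesis using insert.IH insert.prems by simp
  next
    case x_new: False
    have "\<forall>y\<in>Rs. c y \<le> c x" using insert.hyps(2) by blast
    then have "brown_condition Rs c"
      using insert.prems(1) by (rule brown_condition_insert_max[rotated])
    then have IH: "\<exists>S\<subseteq>Rs. (\<Sum>r\<in>S. c r) = u" if "u \<le> (\<Sum>r\<in>Rs. c r)" for u
      using insert.IH that by blast
    show ?thesis
    proof (cases "t \<le> (\<Sum>r\<in>Rs. c r)")
      case True
      then show ?thesis using IH by blast
    next
      case False
      have "(\<Sum>s\<in>{s\<in>insert x Rs. c s < c x}. c s) \<le> (\<Sum>r\<in>Rs. c r)"
        using insert.hyps(1) by (intro sum_mono2) auto
      moreover have "c x \<le> 1 + (\<Sum>s\<in>{s\<in>insert x Rs. c s < c x}. c s)"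
        using insert.prems(1) by (simp add: brown_condition_def)
      ultimately have x_fits: "c x \<le> t" using False by linarith
      have "t - c x \<le> (\<Sum>r\<in>Rs. c r)"
        using insert.prems(2) insert.hyps(1) x_new by simp
      then obtain S where S: "S \<subseteq> Rs" "(\<Sum>r\<in>S. c r) = t - c x" using IH by blast
      have "finite S" and "x \<notin> S" using S(1) insert.hyps(1) x_new finite_subset by auto
      then have "(\<Sum>r\<in>insert x S. c r) = t"
        using S(2) x_fits by simp
      then show ?thesis using S(1) by blast
    qed
  qed
qed

lemma feasible_imp_sum_le:
  assumes "finite Rs" and "feasible F M Rs c"
  shows "F + M \<le> (\<Sum>r\<in>Rs. c r)"
proof -
  obtain S where S: "S \<subseteq> Rs" "(\<Sum>r\<in>S. c r) \<ge> F" "(\<Sum>r\<in>Rs - S. c r) \<ge> M"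
    using assms(2) by (auto simp: feasible_def)
  then show ?thesis
    using sum.subset_diff[OF S(1) assms(1), of c] by linarith
qed

lemma feasible_iff_sum_le_if_brown_condition:
  assumes "finite Rs" and "brown_condition Rs c"
  shows "feasible F M Rs c \<longleftrightarrow> F + M \<le> (\<Sum>r\<in>Rs. c r)"
proof
  show "F + M \<le> (\<Sum>r\<in>Rs. c r)" if "feasible F M Rs c"
    using assms(1) that by (rule feasible_imp_sum_le)
next
  assume total: "F + M \<le> (\<Sum>r\<in>Rs. c r)"
  then have "F \<le> (\<Sum>r\<in>Rs. c r)" by simp
  then obtain S where S: "S \<subseteq> Rs" "(\<Sum>r\<in>S. c r) = F"
    using brown_condition_subset_sum[OF assms] by blast
  then have "(\<Sum>r\<in>Rs - S. c r) \<ge> M"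
    using sum.subset_diff[OF S(1) assms(1), of c] total by linarith
  then show "feasible F M Rs c" unfolding feasible_def using S by blast
qed

lemma sum_le_sum_if_subset_image:
  fixes f :: "'a \<Rightarrow> nat"
  assumes "finite A" and "V \<subseteq> f ` A"
  shows "\<Sum>V \<le> (\<Sum>a\<in>A. f a)"
proof -
  have "\<Sum>V \<le> \<Sum>(f ` A)"
    using assms by (intro sum_mono2) auto
  also have "\<dots> \<le> (\<Sum>a\<in>A. f a)"
    using sum_image_le[OF assms(1), of id f] by simp
  finally show ?thesis .
qed

lemma brown_condition_if_below_values_occur:
  fixes c :: "'r \<Rightarrow> nat"
  assumes "finite Rs"
    and "\<And>r. r \<in> Rs \<Longrightarrow> \<exists>V\<subseteq>c ` Rs. (\<forall>v\<in>V. v < c r) \<and> c r \<le> 1 + \<Sum>V"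
  shows "brown_condition Rs c"
  unfolding brown_condition_def
proof
  fix r assume "r \<in> Rs"
  then obtain V where V: "V \<subseteq> c ` Rs" "\<forall>v\<in>V. v < c r" "c r \<le> 1 + \<Sum>V"
    using assms(2) by blast
  then have "V \<subseteq> c ` {s\<in>Rs. c s < c r}" by blast
  then have "\<Sum>V \<le> (\<Sum>s\<in>{s\<in>Rs. c s < c r}. c s)"
    using assms(1) by (intro sum_le_sum_if_subset_image) auto
  then show "c r \<le> 1 + (\<Sum>s\<in>{s\<in>Rs. c s < c r}. c s)"
    using V(3) by linarith
qed

lemma brown_condition_if_consecutive:
  fixes c :: "'r \<Rightarrow> nat"
  assumes "finite Rs" and "\<And>r k. r \<in> Rs \<Longrightarrow> 0 < k \<Longrightarrow> k < c r \<Longrightarrow> k \<in> c ` Rs"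
  shows "brown_condition Rs c"
  using assms(1)
proof (rule brown_condition_if_below_values_occur)
  fix r assume "r \<in> Rs"
  have "c r \<le> 1 + \<Sum>{1..<c r}"
  proof (cases "c r \<le> 1")
    case False
    then have "c r - 1 \<le> \<Sum>{1..<c r}" by (intro member_le_sum) auto
    then show ?thesis by linarith
  qed auto
  moreover have "{1..<c r} \<subseteq> c ` Rs" using assms(2) \<open>r \<in> Rs\<close> by auto
  ultimately show "\<exists>V\<subseteq>c ` Rs. (\<forall>v\<in>V. v < c r) \<and> c r \<le> 1 + \<Sum>V"
    by (intro exI[of _ "{1..<c r}"]) auto
qed

lemma sum_powers_of_two: "(\<Sum>j<k. (2::nat) ^ j) = 2 ^ k - 1"
  by (induction k) auto

lemma brown_condition_if_powers_of_two:
  fixes c :: "'r \<Rightarrow> nat"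
  assumes "finite Rs" and "\<forall>r\<in>Rs. \<exists>k. c r = 2 ^ k"
    and "\<And>r j. r \<in> Rs \<Longrightarrow> 2 ^ j < c r \<Longrightarrow> 2 ^ j \<in> c ` Rs"
  shows "brown_condition Rs c"
  using assms(1)
proof (rule brown_condition_if_below_values_occur)
  fix r assume r: "r \<in> Rs"
  then obtain k where k: "c r = 2 ^ k" using assms(2) by blast
  let ?V = "(\<lambda>j. 2 ^ j :: nat) ` {..<k}"
  have "\<Sum>?V = 2 ^ k - 1"
    by (simp add: sum.reindex inj_on_def sum_powers_of_two)
  moreover have "?V \<subseteq> c ` Rs" "\<forall>v\<in>?V. v < c r"
    using assms(3) r k by auto
  ultimately show "\<exists>V\<subseteq>c ` Rs. (\<forall>v\<in>V. v < c r) \<and> c r \<le> 1 + \<Sum>V"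
    using k by (intro exI[of _ ?V]) auto
qed

lemma num_rooms_pos_iff:
  assumes "finite Rs"
  shows "num_rooms Rs c k > 0 \<longleftrightarrow> k \<in> c ` Rs"
  using assms by (auto simp: num_rooms_def card_gt_0_iff)

theorem mainTheorem1:
  fixes n F M :: nat and Rs :: "'r set" and c :: "'r \<Rightarrow> nat"
  assumes inst: "is_instance F M Rs c"
    and cases: "((\<forall>r\<in>Rs. c r \<in> {1..n}) \<and> (\<forall>i\<in>{1..n}. num_rooms Rs c i > 0))
              \<or> ((\<forall>r\<in>Rs. c r \<in> {2 ^ i | i. i \<le> n}) \<and> (\<forall>i\<le>n. num_rooms Rs c (2 ^ i) > 0))"
  shows "feasible F M Rs c \<longleftrightarrow> F + M \<le> (\<Sum>r\<in>Rs. c r)"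
proof -
  have fin: "finite Rs" using inst by (simp add: is_instance_def)
  from cases have "brown_condition Rs c"
  proof
    assume "(\<forall>r\<in>Rs. c r \<in> {1..n}) \<and> (\<forall>i\<in>{1..n}. num_rooms Rs c i > 0)"
    then show ?thesis
      using fin by (intro brown_condition_if_consecutive) (auto simp: num_rooms_pos_iff)
  next
    assume powers: "(\<forall>r\<in>Rs. c r \<in> {2 ^ i | i. i \<le> n}) \<and> (\<forall>i\<le>n. num_rooms Rs c (2 ^ i) > 0)"
    have "2 ^ j \<in> c ` Rs" if "r \<in> Rs" "2 ^ j < c r" for r j
    proof -
      obtain i where "c r = 2 ^ i" "i \<le> n" using powers \<open>r \<in> Rs\<close> by auto
      then have "j \<le> n" using \<open>2 ^ j < c r\<close> by simp
      then show ?thesis using powers fin by (simp add: num_rooms_pos_iff)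
    qed
    then show ?thesis
      using fin powers by (intro brown_condition_if_powers_of_two) auto
  qed
  with fin show ?thesis by (rule feasible_iff_sum_le_if_brown_condition)
qed

end
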